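(* Let $n=p^a$ with $p$ prime and $a\in\mathbb{N}$. Then the number of distinct $n\times n$ principal reversible squares is $N_n=\binom{2a-1}{a}$.
   Context: A reversible square matrix is a real matrix $M=(M_{i,j})$ with indices $i,j\in\mathbb{Z}_n=\mathbb{Z}/n\mathbb{Z}$ (top-left entry index $(1,1)$, indices computed modulo $n$) such that (R) $M_{i,j}+M_{i,n+1-j}=M_{i,k}+M_{i,n+1-k}$ and $M_{i,j}+M_{n+1-i,j}=M_{k,j}+M_{n+1-k,j}$ for all $i,j,k$, and (V) $M_{i,j}+M_{k,l}=M_{i,l}+M_{k,j}$ for all $i,j,k,l$. An $n\times n$ principal reversible square is a reversible square matrix whose set of entries is exactly $\{1,\dots,n^2\}$, whose entries increase along each row and each column, and with $M_{1,1}=1$, $M_{1,2}=2$. *)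

theory Defs
  imports Complex_Main "HOL-Computational_Algebra.Primes"
begin

text \<open>An n x n real matrix is represented as a function M :: nat => nat => real whose
  entries live at indices 1..n (and which is 0 outside, so that distinct matrices
  correspond to distinct functions).\<close>

definition midx :: "nat \<Rightarrow> nat \<Rightarrow> nat" where
  "midx n i = ((i + n - 1) mod n) + 1"

definition ent :: "nat \<Rightarrow> (nat \<Rightarrow> nat \<Rightarrow> real) \<Rightarrow> nat \<Rightarrow> nat \<Rightarrow> real" where
  "ent n M i j = M (midx n i) (midx n j)"

definition is_matrix :: "nat \<Rightarrow> (nat \<Rightarrow> nat \<Rightarrow> real) \<Rightarrow> bool" where
  "is_matrix n M \<longleftrightarrow> (\<forall>i j. \<not> (i \<in> {1..n} \<and> j \<in> {1..n}) \<longrightarrow> M i j = 0)"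

definition reversible_square :: "nat \<Rightarrow> (nat \<Rightarrow> nat \<Rightarrow> real) \<Rightarrow> bool" where
  "reversible_square n M \<longleftrightarrow> is_matrix n M \<and>
     (\<forall>i\<in>{1..n}. \<forall>j\<in>{1..n}. \<forall>k\<in>{1..n}.
        ent n M i j + ent n M i (n + 1 - j) = ent n M i k + ent n M i (n + 1 - k) \<and>
        ent n M i j + ent n M (n + 1 - i) j = ent n M k j + ent n M (n + 1 - k) j) \<and>
     (\<forall>i\<in>{1..n}. \<forall>j\<in>{1..n}. \<forall>k\<in>{1..n}. \<forall>l\<in>{1..n}.
        ent n M i j + ent n M k l = ent n M i l + ent n M k j)"

definition principal_reversible_square :: "nat \<Rightarrow> (nat \<Rightarrow> nat \<Rightarrow> real) \<Rightarrow> bool" where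
  "principal_reversible_square n M \<longleftrightarrow> reversible_square n M \<and>
     {ent n M i j | i j. i \<in> {1..n} \<and> j \<in> {1..n}} = real ` {1..n^2} \<and>
     (\<forall>i\<in>{1..n}. \<forall>j\<in>{1..n}. j < n \<longrightarrow> ent n M i j < ent n M i (j + 1)) \<and>
     (\<forall>i\<in>{1..n}. \<forall>j\<in>{1..n}. i < n \<longrightarrow> ent n M i j < ent n M (i + 1) j) \<and>
     ent n M 1 1 = 1 \<and> ent n M 1 2 = 2"

end

theory Submission
  imports Defs
begin

text \<open>A principal reversible square is additive, \<open>M i j = a i + b j + 1\<close> with \<open>a\<close> and
  \<open>b\<close> increasing, so it is determined by the sets \<open>A\<close> and \<open>B\<close> of values of \<open>a\<close> and \<open>b\<close>.
  Apart from (R), its defining conditions say exactly that every number below \<open>n\<^sup>2\<close> is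
  uniquely \<open>x + y\<close> with \<open>x \<in> A\<close>, \<open>y \<in> B\<close> (a tiling of the interval), that
  \<open>card A = card B = n\<close> and that \<open>1 \<in> B\<close>. Condition (R) holds automatically when \<open>n\<close> is a
  prime power, because such tilings consist of centrally symmetric sets.

  By de Bruijn's block argument, a tiling \<open>(A, B)\<close> of \<open>{0..<p^(k+1)}\<close> with \<open>1 \<in> B\<close> comes
  from a unique tiling \<open>(A', B')\<close> of \<open>{0..<p^k}\<close> as \<open>A = p A'\<close>, \<open>B = p B' + {0..<p}\<close>;
  swapping the factors gives the tilings with \<open>1 \<in> A\<close>. So the tilings of \<open>{0..<p^k}\<close>
  with \<open>card A = p^j\<close> satisfy Pascal's recurrence and number \<open>k choose j\<close>, and the principal
  squares of size \<open>p^a\<close> correspond to the tilings of \<open>{0..<p^(2a-1)}\<close> with \<open>card A = p^a\<close>.\<close>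

section \<open>Tilings of an interval\<close>

definition tiling :: "nat \<Rightarrow> nat set \<Rightarrow> nat set \<Rightarrow> bool" where
  "tiling N A B \<longleftrightarrow> 0 \<in> A \<and> 0 \<in> B \<and> (\<forall>a\<in>A. \<forall>b\<in>B. a + b < N) \<and>
     (\<forall>x<N. \<exists>a\<in>A. \<exists>b\<in>B. x = a + b) \<and>
     (\<forall>a\<in>A. \<forall>b\<in>B. \<forall>a'\<in>A. \<forall>b'\<in>B. a + b = a' + b' \<longrightarrow> a = a' \<and> b = b')"

lemma tiling_zero: assumes "tiling N A B" shows "0 \<in> A" "0 \<in> B"
  using assms unfolding tiling_def by blast+

lemma tiling_add_less: "tiling N A B \<Longrightarrow> a \<in> A \<Longrightarrow> b \<in> B \<Longrightarrow> a + b < N"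
  unfolding tiling_def by blast

lemma tiling_decomp:
  assumes "tiling N A B" "x < N"
  obtains a b where "a \<in> A" "b \<in> B" "x = a + b"
  using assms unfolding tiling_def by blast

lemma tiling_unique:
  assumes "tiling N A B" "a \<in> A" "b \<in> B" "a' \<in> A" "b' \<in> B" "a + b = a' + b'"
  shows "a = a'" "b = b'"
  using assms unfolding tiling_def by blast+

lemma tiling_swap:
  assumes "tiling N A B" shows "tiling N B A"
  unfolding tiling_def
proof (intro conjI ballI allI impI)
  show "0 \<in> B" "0 \<in> A" using tiling_zero[OF assms] by simp_all
  show "b + a < N" if "b \<in> B" "a \<in> A" for a b
    using tiling_add_less[OF assms that(2,1)] by simp
  show "\<exists>b\<in>B. \<exists>a\<in>A. x = b + a" if "x < N" for x
    using tiling_decomp[OF assms that] by (metis add.commute)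
  show "b = b'" "a = a'" if "b \<in> B" "a \<in> A" "b' \<in> B" "a' \<in> A" "b + a = b' + a'" for a b a' b'
    using tiling_unique[OF assms that(2,1,4,3)] that(5) by (simp_all add: add.commute)
qed

lemma tiling_subset: assumes "tiling N A B" shows "A \<subseteq> {..<N}" "B \<subseteq> {..<N}"
  using tiling_add_less[OF assms] tiling_zero[OF assms] by force+

lemma tiling_finite: assumes "tiling N A B" shows "finite A" "finite B"
  using tiling_subset[OF assms] finite_subset by blast+

lemma tiling_bij_betw:
  assumes "tiling N A B" shows "bij_betw (\<lambda>(a, b). a + b) (A \<times> B) {..<N}"
proof (rule bij_betw_imageI)
  show "inj_on (\<lambda>(a, b). a + b) (A \<times> B)"
    by (auto simp: inj_on_def dest: tiling_unique[OF assms])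
  show "(\<lambda>(a, b). a + b) ` (A \<times> B) = {..<N}"
  proof
    show "(\<lambda>(a, b). a + b) ` (A \<times> B) \<subseteq> {..<N}" using tiling_add_less[OF assms] by auto
    show "{..<N} \<subseteq> (\<lambda>(a, b). a + b) ` (A \<times> B)"
    proof
      fix x assume "x \<in> {..<N}"
      then obtain a b where "a \<in> A" "b \<in> B" "x = a + b" using tiling_decomp[OF assms] by blast
      then show "x \<in> (\<lambda>(a, b). a + b) ` (A \<times> B)" by force
    qed
  qed
qed

lemma tiling_card: "tiling N A B \<Longrightarrow> card A * card B = N"
  using bij_betw_same_card[OF tiling_bij_betw] by (simp add: card_cartesian_product)

lemma tilingI:
  assumes "finite A" "finite B" "0 \<in> A" "0 \<in> B" "card A * card B = N"
    and sums: "(\<lambda>(a, b). a + b) ` (A \<times> B) = {..<N}"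
  shows "tiling N A B"
proof -
  have "card ((\<lambda>(a, b). a + b) ` (A \<times> B)) = card (A \<times> B)"
    using sums assms(5) by (simp add: card_cartesian_product)
  then have inj: "inj_on (\<lambda>(a, b). a + b) (A \<times> B)"
    using assms(1,2) by (intro eq_card_imp_inj_on) simp_all
  have "a + b < N" if "a \<in> A" "b \<in> B" for a b
  proof -
    have "a + b \<in> (\<lambda>(a, b). a + b) ` (A \<times> B)" using that by force
    then show ?thesis using sums by simp
  qed
  moreover have "\<exists>a\<in>A. \<exists>b\<in>B. x = a + b" if "x < N" for x
  proof -
    have "x \<in> (\<lambda>(a, b). a + b) ` (A \<times> B)" using sums that by simp
    then show ?thesis by auto
  qed
  moreover have "a = a' \<and> b = b'"
    if "a \<in> A" "b \<in> B" "a' \<in> A" "b' \<in> B" "a + b = a' + b'" for a b a' b'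
    using inj_onD[OF inj, of "(a, b)" "(a', b')"] that by simp
  ultimately show ?thesis
    using assms(3,4) unfolding tiling_def by blast
qed

text \<open>De Bruijn's block argument, by strong induction on \<open>t\<close>: a least counterexample
  would give a second decomposition of \<open>t\<close> or of \<open>m * (t div m)\<close>.\<close>

context
  fixes N m :: nat and A B :: "nat set"
  assumes tiling: "tiling N A B"
    and least: "m \<in> A" "0 < m" "\<And>a. a \<in> A \<Longrightarrow> 0 < a \<Longrightarrow> m \<le> a"
begin

lemma tiling_below_least_in_snd:
  assumes "x < m" shows "x \<in> B"
proof -
  have "x < N" using tiling_add_less[OF tiling least(1) tiling_zero(2)[OF tiling]] assms by simp
  then obtain a b where "a \<in> A" "b \<in> B" "x = a + b" using tiling_decomp[OF tiling] by blast
  moreover have "a = 0"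
    using least(3)[OF \<open>a \<in> A\<close>] \<open>x = a + b\<close> assms by (cases "a = 0") auto
  ultimately show ?thesis by simp
qed

lemma tiling_block_step_shift:
  assumes IH: "\<And>s. s < t \<Longrightarrow> (s \<in> A \<longrightarrow> m dvd s) \<and> (s \<in> B \<longleftrightarrow> m * (s div m) \<in> B)"
    and "\<not> m dvd t" and ab: "a \<in> A" "b \<in> B" "m * (t div m) = a + b" "0 < a"
  shows "m dvd a" "b + t mod m \<in> B"
proof -
  have t: "m * (t div m) + t mod m = t" by simp
  have "0 < t mod m" using assms(2) by (simp add: dvd_eq_mod_eq_0)
  then show "m dvd a" using IH[of a] ab t by simp
  then obtain c where "b = m * c" using ab by (metis dvd_add_right_iff dvd_triv_left dvdE)
  then have "m * ((b + t mod m) div m) = b" using least(2) by simp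
  moreover have "b + t mod m < t"
    using least(3)[OF ab(1,4)] mod_less_divisor[OF least(2), of t] t ab(3) by linarith
  ultimately show "b + t mod m \<in> B" using IH[of "b + t mod m"] ab(2) by simp
qed

lemma tiling_block_step_notin_fst:
  assumes IH: "\<And>s. s < t \<Longrightarrow> (s \<in> A \<longrightarrow> m dvd s) \<and> (s \<in> B \<longleftrightarrow> m * (s div m) \<in> B)"
    and "t < N" "\<not> m dvd t"
  shows "t \<notin> A"
proof
  assume tA: "t \<in> A"
  have t: "m * (t div m) + t mod m = t" by simp
  then obtain a b where ab: "a \<in> A" "b \<in> B" "m * (t div m) = a + b"
    using tiling_decomp[OF tiling, of "m * (t div m)"] \<open>t < N\<close> by (metis add_lessD1)
  show False
  proof (cases "a = 0")
    case True
    have "0 < t mod m" "t mod m < m" using assms(3) least(2) by (simp_all add: dvd_eq_mod_eq_0)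
    then have "m - t mod m \<in> B" and "t + (m - t mod m) = m + b"
      using tiling_below_least_in_snd t ab True by simp_all
    then have "t = m" using tiling_unique(1)[OF tiling tA _ least(1) ab(2)] by blast
    with assms(3) show False by simp
  next
    case False
    then have "m dvd a" "b + t mod m \<in> B"
      using tiling_block_step_shift[OF IH assms(3) ab] by simp_all
    moreover have "a + (b + t mod m) = t + 0" using t ab by simp
    ultimately have "a = t"
      using tiling_unique(1)[OF tiling ab(1) _ tA tiling_zero(2)[OF tiling]] by blast
    with \<open>m dvd a\<close> assms(3) show False by simp
  qed
qed

lemma tiling_block_step_in_snd_iff:
  assumes IH: "\<And>s. s < t \<Longrightarrow> (s \<in> A \<longrightarrow> m dvd s) \<and> (s \<in> B \<longleftrightarrow> m * (s div m) \<in> B)"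
    and "t < N" "\<not> m dvd t"
  shows "t \<in> B \<longleftrightarrow> m * (t div m) \<in> B"
proof
  have t: "m * (t div m) + t mod m = t" by simp
  have A0: "0 \<in> A" using tiling_zero[OF tiling] by simp
  assume tB: "t \<in> B"
  obtain a b where ab: "a \<in> A" "b \<in> B" "m * (t div m) = a + b"
    using tiling_decomp[OF tiling, of "m * (t div m)"] t \<open>t < N\<close> by (metis add_lessD1)
  have "a = 0"
  proof (rule ccontr)
    assume "a \<noteq> 0"
    then have "b + t mod m \<in> B" using tiling_block_step_shift[OF IH assms(3) ab] by simp
    moreover have "a + (b + t mod m) = 0 + t" using t ab by simp
    ultimately show False using tiling_unique(1)[OF tiling ab(1) _ A0 tB] \<open>a \<noteq> 0\<close> by blast
  qed
  then show "m * (t div m) \<in> B" using ab by simp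
next
  have A0: "0 \<in> A" using tiling_zero[OF tiling] by simp
  assume floor: "m * (t div m) \<in> B"
  obtain a b where ab: "a \<in> A" "b \<in> B" "t = a + b"
    using tiling_decomp[OF tiling \<open>t < N\<close>] by blast
  have "a = 0"
  proof (rule ccontr)
    assume "a \<noteq> 0"
    moreover have "a \<noteq> t" using tiling_block_step_notin_fst[OF IH assms(2,3)] ab(1) by blast
    ultimately obtain c where "a = m * c" "b < t" using IH[of a] ab least(3)[OF ab(1)] by fastforce
    then have "m * (b div m) = b - t mod m" "t mod m \<le> b"
      using ab(3) by (simp_all add: minus_mod_eq_mult_div[symmetric])
    then have "b - t mod m \<in> B" and "a + (b - t mod m) = 0 + m * (t div m)"
      using IH[of b] \<open>b < t\<close> ab by (simp_all add: minus_mod_eq_mult_div)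
    then show False using tiling_unique(1)[OF tiling ab(1) _ A0 floor] \<open>a \<noteq> 0\<close> by blast
  qed
  then show "t \<in> B" using ab by simp
qed

lemma tiling_block_structure:
  "t < N \<Longrightarrow> (t \<in> A \<longrightarrow> m dvd t) \<and> (t \<in> B \<longleftrightarrow> m * (t div m) \<in> B)"
proof (induction t rule: less_induct)
  case (less t)
  show ?case
  proof (cases "m dvd t")
    case False
    have IH: "\<And>s. s < t \<Longrightarrow> (s \<in> A \<longrightarrow> m dvd s) \<and> (s \<in> B \<longleftrightarrow> m * (s div m) \<in> B)"
      using less by simp
    show ?thesis using tiling_block_step_notin_fst[OF IH less.prems False]
        tiling_block_step_in_snd_iff[OF IH less.prems False] by blast
  qed auto
qed

lemma tiling_least_dvd_fst: "a \<in> A \<Longrightarrow> m dvd a"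
  using tiling_block_structure tiling_subset[OF tiling] by blast

lemma tiling_snd_block_iff: "t < N \<Longrightarrow> t \<in> B \<longleftrightarrow> m * (t div m) \<in> B"
  using tiling_block_structure by blast

lemma tiling_snd_block_iff_dvd_least:
  assumes "q dvd m" "0 < q" "t < N"
  shows "t \<in> B \<longleftrightarrow> q * (t div q) \<in> B"
proof -
  obtain c where c: "m = q * c" using assms(1) ..
  have "q * (t div q) < N" using assms(3) times_div_less_eq_dividend le_less_trans by blast
  have "t \<in> B \<longleftrightarrow> m * (t div m) \<in> B" using tiling_snd_block_iff[OF assms(3)] .
  also have "m * (t div m) = m * ((q * (t div q)) div m)"
    using c assms(2) by (simp add: div_mult2_eq)
  also have "\<dots> \<in> B \<longleftrightarrow> q * (t div q) \<in> B"
    using tiling_snd_block_iff[OF \<open>q * (t div q) < N\<close>] by simp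
  finally show ?thesis .
qed

lemma tiling_least_dvd: "m dvd N"
proof (rule ccontr)
  assume "\<not> m dvd N"
  define r where "r = N mod m"
  have r: "0 < r" "r < m" using \<open>\<not> m dvd N\<close> least(2) r_def by (auto simp: dvd_eq_mod_eq_0)
  have N: "m * (N div m) + r = N" using r_def by simp
  have "m * (N div m) < N" using N r by linarith
  then obtain a b where ab: "a \<in> A" "b \<in> B" "m * (N div m) = a + b"
    using tiling_decomp[OF tiling] by blast
  show False
  proof (cases "a = 0")
    case True
    then have "m + b < N" using tiling_add_less[OF tiling least(1) ab(2)] by simp
    then show False using N ab True r by linarith
  next
    case False
    obtain c where "b = m * c"
      using tiling_least_dvd_fst[OF ab(1)] ab(3) by (metis dvd_add_right_iff dvd_triv_left dvdE)
    then have "m * ((b + r) div m) = b" using r by simp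
    moreover have "b + r < N" using N ab r False by linarith
    ultimately have "b + r \<in> B" using tiling_snd_block_iff[of "b + r"] ab(2) by simp
    then have "a + (b + r) < N" using tiling_add_less[OF tiling ab(1)] by simp
    then show False using N ab by linarith
  qed
qed

end

section \<open>Tilings of prime-power intervals\<close>

definition scale :: "nat \<Rightarrow> nat set \<Rightarrow> nat set" where
  "scale p A = (*) p ` A"

definition blow_up :: "nat \<Rightarrow> nat set \<Rightarrow> nat set" where
  "blow_up p B = {p * x + d | x d. x \<in> B \<and> d < p}"

definition refine :: "nat \<Rightarrow> nat set \<times> nat set \<Rightarrow> nat set \<times> nat set" where
  "refine p X = (scale p (fst X), blow_up p (snd X))"

lemma fst_refine [simp]: "fst (refine p X) = scale p (fst X)"
  and snd_refine [simp]: "snd (refine p X) = blow_up p (snd X)"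
  unfolding refine_def by simp_all

lemma mult_add_eq_mult_add_iff:
  fixes p :: nat
  assumes "d < p" "e < p"
  shows "p * x + d = p * y + e \<longleftrightarrow> x = y \<and> d = e"
proof
  assume eq: "p * x + d = p * y + e"
  then have "(p * x + d) mod p = (p * y + e) mod p" by simp
  then have "d = e" using assms by simp
  with eq show "x = y \<and> d = e" using assms by simp
qed simp

lemma mult_in_scale_iff: "0 < p \<Longrightarrow> p * x \<in> scale p A \<longleftrightarrow> x \<in> A"
  unfolding scale_def by auto

lemma mult_in_blow_up_iff:
  assumes "0 < p" shows "p * x \<in> blow_up p B \<longleftrightarrow> x \<in> B"
proof
  assume "p * x \<in> blow_up p B"
  then obtain y d where "y \<in> B" "d < p" "p * x = p * y + d" unfolding blow_up_def by auto
  then have "y = x" using mult_add_eq_mult_add_iff[of 0 p d x y] assms by simp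
  with \<open>y \<in> B\<close> show "x \<in> B" by simp
next
  assume "x \<in> B" then show "p * x \<in> blow_up p B" unfolding blow_up_def using assms by force
qed

lemma inj_refine: assumes "0 < p" shows "inj (refine p)"
proof (rule injI)
  fix X Y assume "refine p X = refine p Y"
  then have "p * x \<in> scale p (fst X) \<longleftrightarrow> p * x \<in> scale p (fst Y)"
    "p * x \<in> blow_up p (snd X) \<longleftrightarrow> p * x \<in> blow_up p (snd Y)" for x
    unfolding refine_def by simp_all
  then show "X = Y"
    using mult_in_scale_iff[OF assms] mult_in_blow_up_iff[OF assms] by (simp add: prod_eq_iff set_eq_iff)
qed

lemma one_notin_scale:
  assumes "1 < p" shows "1 \<notin> scale p A"
proof
  assume "1 \<in> scale p A"
  then have "p dvd 1" unfolding scale_def by auto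
  with assms show False by simp
qed

lemma one_in_blow_up: "1 < p \<Longrightarrow> 0 \<in> B \<Longrightarrow> 1 \<in> blow_up p B"
  unfolding blow_up_def by force

lemma card_scale: "0 < p \<Longrightarrow> card (scale p A) = card A"
  unfolding scale_def by (rule card_image) (auto simp: inj_on_def)

lemma blow_up_eq_image: "blow_up p B = (\<lambda>(x, d). p * x + d) ` (B \<times> {..<p})"
  unfolding blow_up_def by auto

lemma card_blow_up:
  assumes "0 < p" shows "card (blow_up p B) = p * card B"
proof -
  have "inj_on (\<lambda>(x, d). p * x + d) (B \<times> {..<p})"
    using mult_add_eq_mult_add_iff[of _ p] by (auto simp: inj_on_def)
  then show ?thesis by (simp add: blow_up_eq_image card_image card_cartesian_product)
qed

lemma tiling_refine:
  assumes p: "0 < p" and T: "tiling N A B"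
  shows "tiling (p * N) (scale p A) (blow_up p B)"
proof (rule tilingI)
  show "finite (scale p A)" "finite (blow_up p B)"
    using tiling_finite[OF T] unfolding scale_def blow_up_eq_image by simp_all
  show "0 \<in> scale p A" "0 \<in> blow_up p B"
    using tiling_zero[OF T] mult_in_scale_iff[OF p, of 0] mult_in_blow_up_iff[OF p, of 0] by simp_all
  show "card (scale p A) * card (blow_up p B) = p * N"
    using tiling_card[OF T] card_scale[OF p] card_blow_up[OF p] by simp
  show "(\<lambda>(a, b). a + b) ` (scale p A \<times> blow_up p B) = {..<p * N}"
  proof (intro set_eqI iffI)
    fix x assume "x \<in> (\<lambda>(a, b). a + b) ` (scale p A \<times> blow_up p B)"
    then obtain a b d where "a \<in> A" "b \<in> B" "d < p" "x = p * a + (p * b + d)"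
      unfolding scale_def blow_up_def by auto
    moreover have "Suc (a + b) \<le> N" using tiling_add_less[OF T \<open>a \<in> A\<close> \<open>b \<in> B\<close>] by simp
    then have "p * Suc (a + b) \<le> p * N" by (rule mult_le_mono2)
    ultimately show "x \<in> {..<p * N}" by (simp add: algebra_simps)
  next
    fix x assume "x \<in> {..<p * N}"
    then have "x div p < N" by (simp add: less_mult_imp_div_less mult.commute)
    then obtain a b where ab: "a \<in> A" "b \<in> B" "x div p = a + b" using tiling_decomp[OF T] by blast
    have "x = p * a + (p * b + x mod p)"
      using ab div_mult_mod_eq[of x p] by (simp add: algebra_simps)
    moreover have "p * a \<in> scale p A" "p * b + x mod p \<in> blow_up p B"
      using ab mod_less_divisor[OF p] unfolding scale_def blow_up_def by blast+
    ultimately show "x \<in> (\<lambda>(a, b). a + b) ` (scale p A \<times> blow_up p B)" by force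
  qed
qed

lemma tiling_unrefine:
  assumes p: "0 < p" and T: "tiling (p * N) (scale p A) (blow_up p B)"
  shows "tiling N A B"
proof -
  have "finite ((*) p -` blow_up p B)"
    using tiling_finite(2)[OF T] p by (intro finite_vimageI) (auto simp: inj_def)
  moreover have "(*) p -` blow_up p B = B" using mult_in_blow_up_iff[OF p] by auto
  ultimately have fin: "finite A" "finite B"
    using tiling_finite(1)[OF T] finite_imageD[of "(*) p" A] p unfolding scale_def
    by (simp_all add: inj_on_def)
  show ?thesis
  proof (rule tilingI[OF fin])
    show "0 \<in> A" "0 \<in> B"
      using tiling_zero[OF T] mult_in_scale_iff[OF p, of 0] mult_in_blow_up_iff[OF p, of 0] by simp_all
    show "card A * card B = N"
      using tiling_card[OF T] card_scale[OF p] card_blow_up[OF p] p by simp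
    show "(\<lambda>(a, b). a + b) ` (A \<times> B) = {..<N}"
    proof (intro set_eqI iffI)
      fix x assume "x \<in> (\<lambda>(a, b). a + b) ` (A \<times> B)"
      then obtain a b where "a \<in> A" "b \<in> B" "x = a + b" by auto
      then have "p * a + p * b < p * N"
        using tiling_add_less[OF T] mult_in_scale_iff[OF p] mult_in_blow_up_iff[OF p] by blast
      then show "x \<in> {..<N}" using \<open>x = a + b\<close> by (simp add: distrib_left[symmetric])
    next
      fix x assume "x \<in> {..<N}"
      then have "p * x < p * N" using p by simp
      then obtain a b d where "a \<in> A" "b \<in> B" "d < p" "p * x = p * a + (p * b + d)"
        using tiling_decomp[OF T] unfolding scale_def blow_up_def by blast
      then have "p * x + 0 = p * (a + b) + d" by (simp add: algebra_simps)
      then have "x = a + b" using mult_add_eq_mult_add_iff[of 0 p d] p \<open>d < p\<close> by blast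
      then show "x \<in> (\<lambda>(a, b). a + b) ` (A \<times> B)" using \<open>a \<in> A\<close> \<open>b \<in> B\<close> by force
    qed
  qed
qed

lemma tiling_eq_refine:
  assumes p: "0 < p" and T: "tiling (p * N) A B"
    and dvd: "\<forall>a\<in>A. p dvd a" and block: "\<forall>t<p * N. t \<in> B \<longleftrightarrow> p * (t div p) \<in> B"
  shows "(A, B) = refine p ({x. p * x \<in> A}, {x. p * x \<in> B})"
proof -
  have "A = scale p {x. p * x \<in> A}"
  proof (intro set_eqI iffI)
    fix a assume "a \<in> A"
    moreover obtain c where "a = p * c" using dvd \<open>a \<in> A\<close> by (meson dvdE)
    ultimately show "a \<in> scale p {x. p * x \<in> A}" unfolding scale_def by blast
  qed (auto simp: scale_def)
  moreover have "B = blow_up p {x. p * x \<in> B}"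
  proof (intro set_eqI iffI)
    fix b assume "b \<in> B"
    then have "p * (b div p) \<in> B" using block tiling_subset[OF T] by auto
    moreover have "b = p * (b div p) + b mod p" by simp
    ultimately show "b \<in> blow_up p {x. p * x \<in> B}"
      using mod_less_divisor[OF p] unfolding blow_up_def by blast
  next
    fix b assume "b \<in> blow_up p {x. p * x \<in> B}"
    then obtain x d where b: "p * x \<in> B" "d < p" "b = p * x + d" unfolding blow_up_def by auto
    then have "Suc x \<le> N" using tiling_subset[OF T] by auto
    then have "b < p * N" using b mult_le_mono2[of "Suc x" N p] by simp
    then have "b \<in> B \<longleftrightarrow> p * (b div p) \<in> B" using block by blast
    moreover have "p * (b div p) = p * x" using b by simp
    ultimately show "b \<in> B" using b(1) by simp
  qed
  ultimately show ?thesis unfolding refine_def by simp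
qed

lemma tiling_prime_power_eq_refine:
  assumes p: "prime p" and T: "tiling (p ^ Suc k) A B" and one: "1 \<in> B"
  shows "(A, B) = refine p ({x. p * x \<in> A}, {x. p * x \<in> B})"
proof -
  have p0: "0 < p" using p prime_gt_0_nat by blast
  have floor_less: "p * (t div p) < p ^ Suc k" if "t < p ^ Suc k" for t
    using that times_div_less_eq_dividend le_less_trans by blast
  have "(\<forall>a\<in>A. p dvd a) \<and> (\<forall>t<p ^ Suc k. t \<in> B \<longleftrightarrow> p * (t div p) \<in> B)"
  proof (cases "\<exists>a\<in>A. 0 < a")
    case False
    have "t \<in> B" if t: "t < p ^ Suc k" for t
    proof -
      obtain a b where "a \<in> A" "b \<in> B" "t = a + b" using tiling_decomp[OF T t] by blast
      with False show ?thesis by auto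
    qed
    with False floor_less show ?thesis by auto
  next
    case True
    define m where "m = (LEAST a. a \<in> A \<and> 0 < a)"
    have "m \<in> A \<and> 0 < m" unfolding m_def by (rule LeastI_ex) (use True in blast)
    moreover have "m \<le> a" if "a \<in> A" "0 < a" for a
      unfolding m_def by (rule Least_le) (use that in simp)
    ultimately have m: "m \<in> A" "0 < m" "\<And>a. a \<in> A \<Longrightarrow> 0 < a \<Longrightarrow> m \<le> a" by simp_all
    have "m dvd p ^ Suc k" using tiling_least_dvd[OF T m] .
    then obtain i where i: "m = p ^ i" using divides_primepow_nat[OF p] by blast
    have "m \<noteq> 1"
    proof
      assume "m = 1"
      then have "(1::nat) + 0 = 0 + 1" "1 \<in> A" using m(1) by simp_all
      then show False using tiling_unique(1)[OF T _ tiling_zero(2)[OF T] tiling_zero(1)[OF T] one] by simp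
    qed
    then have "p dvd m" using i by (cases i) simp_all
    then show ?thesis
      using tiling_least_dvd_fst[OF T m] tiling_snd_block_iff_dvd_least[OF T m _ p0]
      by (auto intro: dvd_trans[OF \<open>p dvd m\<close>])
  qed
  then show ?thesis using tiling_eq_refine[OF p0, of "p ^ k"] T by simp
qed

definition tilings :: "nat \<Rightarrow> (nat set \<times> nat set) set" where
  "tilings N = {X. tiling N (fst X) (snd X)}"

lemma finite_tilings: "finite (tilings N)"
proof (rule finite_subset)
  show "tilings N \<subseteq> Pow {..<N} \<times> Pow {..<N}"
    unfolding tilings_def by (auto dest: tiling_subset(1,2)[THEN subsetD])
qed simp

lemma tilings_1: "tilings 1 = {({0}, {0})}"
proof (intro set_eqI iffI)
  fix X assume "X \<in> tilings 1"
  then have "tiling 1 (fst X) (snd X)" unfolding tilings_def by simp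
  then show "X \<in> {({0}, {0})}"
    using tiling_subset[of 1 "fst X" "snd X"] tiling_zero[of 1 "fst X" "snd X"] by (auto simp: prod_eq_iff)
qed (simp add: tilings_def tiling_def)

lemma swap_in_tilings_iff: "prod.swap X \<in> tilings N \<longleftrightarrow> X \<in> tilings N"
  unfolding tilings_def using tiling_swap by auto

lemma refine_in_tilings_iff: "0 < p \<Longrightarrow> refine p X \<in> tilings (p * N) \<longleftrightarrow> X \<in> tilings N"
  using tiling_refine[of p N "fst X" "snd X"] tiling_unrefine[of p N "fst X" "snd X"]
  unfolding tilings_def by auto

lemma tilings_eq_one_in_snd_Un_swap:
  assumes "1 < N"
  shows "tilings N = {X \<in> tilings N. 1 \<in> snd X} \<union> prod.swap ` {X \<in> tilings N. 1 \<in> snd X}"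
proof (intro set_eqI iffI)
  fix X assume X: "X \<in> tilings N"
  then obtain a b where "a \<in> fst X" "b \<in> snd X" "1 = a + b"
    using assms tiling_decomp[of N "fst X" "snd X"] unfolding tilings_def by auto
  then have "1 \<in> snd X \<or> 1 \<in> snd (prod.swap X)" by (cases a) auto
  then show "X \<in> {X \<in> tilings N. 1 \<in> snd X} \<union> prod.swap ` {X \<in> tilings N. 1 \<in> snd X}"
  proof
    assume "1 \<in> snd (prod.swap X)"
    then have "prod.swap X \<in> {X \<in> tilings N. 1 \<in> snd X}" using X swap_in_tilings_iff by simp
    then have "prod.swap (prod.swap X) \<in> prod.swap ` {X \<in> tilings N. 1 \<in> snd X}" by (rule imageI)
    then show ?thesis by simp
  qed (use X in simp)
next
  fix X assume "X \<in> {X \<in> tilings N. 1 \<in> snd X} \<union> prod.swap ` {X \<in> tilings N. 1 \<in> snd X}"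
  then show "X \<in> tilings N" using swap_in_tilings_iff by auto
qed

lemma tilings_prime_power_one_in_snd:
  assumes p: "prime p"
  shows "{X \<in> tilings (p ^ Suc k). 1 \<in> snd X} = refine p ` tilings (p ^ k)"
proof (intro set_eqI iffI)
  have p0: "0 < p" using p prime_gt_0_nat by blast
  fix X assume "X \<in> {X \<in> tilings (p ^ Suc k). 1 \<in> snd X}"
  then have X: "tiling (p ^ Suc k) (fst X) (snd X)" "1 \<in> snd X" unfolding tilings_def by auto
  define Y where "Y = ({x. p * x \<in> fst X}, {x. p * x \<in> snd X})"
  have XY: "X = refine p Y" using tiling_prime_power_eq_refine[OF p X] unfolding Y_def by simp
  then have "refine p Y \<in> tilings (p * p ^ k)" using X(1) unfolding tilings_def by simp
  then have "Y \<in> tilings (p ^ k)" using refine_in_tilings_iff[OF p0] by blast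
  with XY show "X \<in> refine p ` tilings (p ^ k)" by blast
next
  have p1: "1 < p" using p prime_gt_1_nat by blast
  fix X assume "X \<in> refine p ` tilings (p ^ k)"
  then obtain Y where Y: "Y \<in> tilings (p ^ k)" "X = refine p Y" by blast
  have "0 \<in> snd Y" using Y(1) tiling_zero(2) unfolding tilings_def by blast
  then have "1 \<in> snd X" using one_in_blow_up[OF p1] Y(2) by simp
  moreover have "X \<in> tilings (p * p ^ k)" using Y refine_in_tilings_iff p1 by simp
  ultimately show "X \<in> {X \<in> tilings (p ^ Suc k). 1 \<in> snd X}" by simp
qed

lemma tilings_prime_power_Suc:
  assumes p: "prime p"
  shows "tilings (p ^ Suc k) = refine p ` tilings (p ^ k) \<union> prod.swap ` refine p ` tilings (p ^ k)"
proof -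
  have "1 < p ^ Suc k" using p prime_gt_1_nat one_less_power by blast
  from tilings_eq_one_in_snd_Un_swap[OF this] show ?thesis
    by (simp only: tilings_prime_power_one_in_snd[OF p])
qed

lemma card_tilings_snd_eq_fst:
  "card {X \<in> tilings N. card (snd X) = c} = card {X \<in> tilings N. card (fst X) = c}"
proof -
  have "prod.swap ` {X \<in> tilings N. card (fst X) = c} = {X \<in> tilings N. card (snd X) = c}"
  proof (intro set_eqI iffI)
    fix X assume "X \<in> {X \<in> tilings N. card (snd X) = c}"
    then have "prod.swap X \<in> {X \<in> tilings N. card (fst X) = c}"
      using swap_in_tilings_iff[of X N] by simp
    then show "X \<in> prod.swap ` {X \<in> tilings N. card (fst X) = c}"
      by (rule image_eqI[rotated]) simp
  next
    fix X assume "X \<in> prod.swap ` {X \<in> tilings N. card (fst X) = c}"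
    then obtain Y where "Y \<in> tilings N" "card (fst Y) = c" "X = prod.swap Y" by blast
    then show "X \<in> {X \<in> tilings N. card (snd X) = c}" using swap_in_tilings_iff by simp
  qed
  moreover have "card (prod.swap ` {X \<in> tilings N. card (fst X) = c})
      = card {X \<in> tilings N. card (fst X) = c}"
    by (rule card_image) simp
  ultimately show ?thesis by simp
qed

lemma card_tilings_prime_power_Suc:
  assumes p: "prime p"
  shows "card {X \<in> tilings (p ^ Suc k). card (fst X) = c}
    = card {Y \<in> tilings (p ^ k). card (fst Y) = c} + card {Y \<in> tilings (p ^ k). p * card (snd Y) = c}"
proof -
  have p1: "1 < p" using p prime_gt_1_nat by blast
  then have p0: "0 < p" by simp
  define T where "T = tilings (p ^ k)"
  define S1 where "S1 = {Y \<in> T. card (fst Y) = c}"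
  define S2 where "S2 = {Y \<in> T. p * card (snd Y) = c}"
  have "{X \<in> tilings (p ^ Suc k). card (fst X) = c}
      = {X \<in> refine p ` T. card (fst X) = c} \<union> {X \<in> prod.swap ` refine p ` T. card (fst X) = c}"
    unfolding tilings_prime_power_Suc[OF p] T_def by blast
  also have "{X \<in> refine p ` T. card (fst X) = c} = refine p ` S1"
    unfolding Compr_image_eq S1_def by (simp add: card_scale[OF p0])
  also have "{X \<in> prod.swap ` refine p ` T. card (fst X) = c} = prod.swap ` refine p ` S2"
    unfolding Compr_image_eq S2_def by (simp add: card_blow_up[OF p0])
  finally have split: "{X \<in> tilings (p ^ Suc k). card (fst X) = c}
      = refine p ` S1 \<union> prod.swap ` refine p ` S2" .
  have "1 \<in> snd X" if "X \<in> refine p ` S1" for X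
    using that tilings_prime_power_one_in_snd[OF p] unfolding S1_def T_def by blast
  moreover have "1 \<notin> snd X" if "X \<in> prod.swap ` refine p ` S2" for X
    using that one_notin_scale[OF p1] by auto
  ultimately have disjoint: "refine p ` S1 \<inter> prod.swap ` refine p ` S2 = {}" by blast
  have inj: "inj_on (refine p) S" for S
    using inj_refine[OF p0] inj_on_subset by blast
  have fin: "finite S1" "finite S2" using finite_tilings unfolding S1_def S2_def T_def by simp_all
  show ?thesis
    unfolding split using disjoint fin inj by (simp add: card_Un_disjoint card_image S1_def S2_def T_def)
qed

lemma card_tilings_prime_power:
  assumes p: "prime p"
  shows "card {X \<in> tilings (p ^ k). card (fst X) = p ^ j} = k choose j"
proof (induction k arbitrary: j)
  case 0
  have T0: "tilings (p ^ 0) = {({0}, {0})}" using tilings_1 by simp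
  show ?case
  proof (cases j)
    case 0
    then have single: "{X \<in> tilings (p ^ 0). card (fst X) = p ^ j} = {({0}, {0})}" using T0 by auto
    show ?thesis unfolding single using 0 by simp
  next
    case (Suc i)
    then have "1 < p ^ j" using p prime_gt_1_nat one_less_power by blast
    then have empty: "{X \<in> tilings (p ^ 0). card (fst X) = p ^ j} = {}" using T0 by auto
    show ?thesis unfolding empty using Suc by simp
  qed
next
  case (Suc k)
  have p1: "1 < p" using p prime_gt_1_nat by blast
  have "card {X \<in> tilings (p ^ Suc k). card (fst X) = p ^ j}
      = card {Y \<in> tilings (p ^ k). card (fst Y) = p ^ j} + card {Y \<in> tilings (p ^ k). p * card (snd Y) = p ^ j}"
    by (rule card_tilings_prime_power_Suc[OF p])
  also have "card {Y \<in> tilings (p ^ k). card (fst Y) = p ^ j} = k choose j" by (rule Suc.IH)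
  also have "card {Y \<in> tilings (p ^ k). p * card (snd Y) = p ^ j} = (case j of 0 \<Rightarrow> 0 | Suc i \<Rightarrow> k choose i)"
  proof (cases j)
    case 0
    then show ?thesis using p1 by simp
  next
    case (Suc i)
    then have "{Y \<in> tilings (p ^ k). p * card (snd Y) = p ^ j} = {Y \<in> tilings (p ^ k). card (snd Y) = p ^ i}"
      using p1 by auto
    then show ?thesis using card_tilings_snd_eq_fst Suc.IH Suc by simp
  qed
  finally show ?case by (cases j) simp_all
qed

lemma card_tilings_prime_power_one_in_snd:
  assumes p: "prime p"
  shows "card {X \<in> tilings (p ^ Suc k). 1 \<in> snd X \<and> card (fst X) = p ^ j} = k choose j"
proof -
  have p0: "0 < p" using p prime_gt_0_nat by blast
  have "{X \<in> tilings (p ^ Suc k). 1 \<in> snd X \<and> card (fst X) = p ^ j}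
      = {X \<in> refine p ` tilings (p ^ k). card (fst X) = p ^ j}"
    using tilings_prime_power_one_in_snd[OF p] by blast
  also have "\<dots> = refine p ` {Y \<in> tilings (p ^ k). card (fst Y) = p ^ j}"
    unfolding Compr_image_eq by (simp add: card_scale[OF p0])
  finally have "card {X \<in> tilings (p ^ Suc k). 1 \<in> snd X \<and> card (fst X) = p ^ j}
      = card {Y \<in> tilings (p ^ k). card (fst Y) = p ^ j}"
    using card_image[OF inj_on_subset[OF inj_refine[OF p0]]] by simp
  then show ?thesis using card_tilings_prime_power[OF p] by simp
qed

definition symmetric_set :: "nat set \<Rightarrow> bool" where
  "symmetric_set S \<longleftrightarrow> (\<exists>K. \<forall>x\<in>S. x \<le> K \<and> K - x \<in> S)"

lemma symmetric_set_scale: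
  assumes "symmetric_set A" shows "symmetric_set (scale p A)"
proof -
  obtain K where K: "\<forall>x\<in>A. x \<le> K \<and> K - x \<in> A" using assms unfolding symmetric_set_def by blast
  have "p * x \<le> p * K \<and> p * K - p * x \<in> scale p A" if "x \<in> A" for x
  proof -
    have "p * K - p * x = p * (K - x)" by (simp add: diff_mult_distrib2)
    then show ?thesis using K that unfolding scale_def by auto
  qed
  then show ?thesis unfolding symmetric_set_def scale_def by blast
qed

lemma symmetric_set_blow_up:
  assumes "0 < p" "symmetric_set B" shows "symmetric_set (blow_up p B)"
proof -
  obtain K where K: "\<forall>x\<in>B. x \<le> K \<and> K - x \<in> B" using assms unfolding symmetric_set_def by blast
  have "z \<le> p * K + (p - 1) \<and> p * K + (p - 1) - z \<in> blow_up p B" if z: "z \<in> blow_up p B" for z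
  proof -
    obtain x d where z: "x \<in> B" "d < p" "z = p * x + d" using z unfolding blow_up_def by auto
    have "x \<le> K" using K z by simp
    then have "p * K = p * x + p * (K - x)" by (simp add: diff_mult_distrib2)
    then have "z \<le> p * K + (p - 1)" and "p * K + (p - 1) - z = p * (K - x) + (p - 1 - d)"
      using z by linarith+
    moreover have "K - x \<in> B" "p - 1 - d < p" using K z assms(1) by simp_all
    ultimately show ?thesis unfolding blow_up_def by blast
  qed
  then show ?thesis unfolding symmetric_set_def by blast
qed

lemma tilings_prime_power_symmetric:
  assumes p: "prime p"
  shows "X \<in> tilings (p ^ k) \<Longrightarrow> symmetric_set (fst X) \<and> symmetric_set (snd X)"
proof (induction k arbitrary: X)
  case 0
  then show ?case using tilings_1 by (auto simp: symmetric_set_def)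
next
  case (Suc k)
  have p0: "0 < p" using p prime_gt_0_nat by blast
  from Suc.prems obtain Y where Y: "Y \<in> tilings (p ^ k)" "X = refine p Y \<or> X = prod.swap (refine p Y)"
    unfolding tilings_prime_power_Suc[OF p] by blast
  have "symmetric_set (scale p (fst Y))" "symmetric_set (blow_up p (snd Y))"
    using Suc.IH[OF Y(1)] symmetric_set_scale symmetric_set_blow_up[OF p0] by simp_all
  with Y(2) show ?case by auto
qed

section \<open>Principal reversible squares and tilings\<close>

lemma sorted_list_of_set_nth_0:
  fixes A :: "nat set"
  assumes "finite A" "0 \<in> A" shows "sorted_list_of_set A ! 0 = 0"
proof -
  have "A \<noteq> {}" "Min A = 0" using assms by (auto intro: Min_eqI)
  then show ?thesis using sorted_list_of_set_nonempty[OF assms(1)] by simp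
qed

lemma sorted_list_of_set_nth_1:
  fixes A :: "nat set"
  assumes "finite A" "0 \<in> A" "1 \<in> A" shows "sorted_list_of_set A ! 1 = 1"
proof -
  have "A \<noteq> {}" "Min A = 0" using assms by (auto intro: Min_eqI)
  moreover have "A - {0} \<noteq> {}" "Min (A - {0}) = 1" using assms by (auto intro: Min_eqI)
  ultimately show ?thesis
    using sorted_list_of_set_nonempty[OF assms(1)] sorted_list_of_set_nonempty[of "A - {0}"] assms(1)
    by simp
qed

lemma nth_sorted_list_of_set_symmetric:
  fixes A :: "nat set"
  assumes fin: "finite A" and K: "\<forall>x\<in>A. x \<le> K \<and> K - x \<in> A" and i: "i < card A"
  shows "sorted_list_of_set A ! i + sorted_list_of_set A ! (card A - 1 - i) = K"
proof -
  define L where "L = sorted_list_of_set A"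
  define n where "n = card A"
  have len: "length L = n" and set: "set L = A" and sorted: "sorted_wrt (<) L"
    using fin unfolding L_def n_def by simp_all
  have le: "L ! k \<le> K" if "k < n" for k using K set len that nth_mem by blast
  define L' where "L' = map (\<lambda>x. K - x) (rev L)"
  have len': "length L' = n" using len L'_def by simp
  have nth': "L' ! k = K - L ! (n - 1 - k)" if "k < n" for k
    using that len unfolding L'_def by (simp add: rev_nth Suc_diff_Suc)
  have "sorted_wrt (<) L'"
    unfolding sorted_wrt_iff_nth_less
  proof (intro allI impI)
    fix k l assume kl: "k < l" "l < length L'"
    then have "L ! (n - 1 - l) < L ! (n - 1 - k)" using sorted_wrt_nth_less[OF sorted] len len' by auto
    moreover have "L ! (n - 1 - k) \<le> K" using le kl len' by simp
    ultimately show "L' ! k < L' ! l" using nth' kl len' by simp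
  qed
  moreover have "set L' = A"
  proof (intro set_eqI iffI)
    fix y assume "y \<in> A"
    then have "K - y \<in> set L" "y = K - (K - y)" using K set by auto
    then show "y \<in> set L'" unfolding L'_def by auto
  qed (use K set L'_def in auto)
  ultimately have "L' = L" using strict_sorted_equal[OF sorted] set by simp
  then have "L ! i = K - L ! (n - 1 - i)" using nth' i n_def by metis
  then show ?thesis using le[of "n - 1 - i"] i unfolding L_def n_def by simp
qed

lemma image_nth_sorted_list_of_set:
  fixes A :: "'a::linorder set"
  assumes "finite A" shows "(\<lambda>i. sorted_list_of_set A ! (i - 1)) ` {1..card A} = A"
proof -
  have "(\<lambda>i. sorted_list_of_set A ! (i - 1)) ` {1..card A} = (\<lambda>k. sorted_list_of_set A ! k) ` {..<card A}"
  proof -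
    have "{1..card A} = Suc ` {..<card A}" by (simp add: image_Suc_lessThan)
    then show ?thesis by (simp add: image_image)
  qed
  also have "\<dots> = set (sorted_list_of_set A)" using assms by (auto simp: set_conv_nth)
  finally show ?thesis using assms by simp
qed

lemma sorted_list_of_set_image_upt:
  fixes u :: "nat \<Rightarrow> 'a::linorder"
  assumes "\<And>i. 1 \<le> i \<Longrightarrow> i < n \<Longrightarrow> u i < u (Suc i)"
  shows "sorted_list_of_set (u ` {1..n}) = map u [1..<Suc n]"
proof -
  have sorted: "sorted_wrt (<) (map u [1..<Suc n])"
    unfolding sorted_wrt_iff_nth_Suc_transp[OF transp_on_less] using assms by (simp del: upt_Suc)
  have set: "set (map u [1..<Suc n]) = u ` {1..n}"
    by (simp del: upt_Suc add: atLeastLessThanSuc_atLeastAtMost)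
  have "distinct (map u [1..<Suc n])" using sorted strict_sorted_iff by blast
  then have "card (u ` {1..n}) = length (map u [1..<Suc n])" using distinct_card set by metis
  then show ?thesis
    using sorted_list_of_set_unique[of "u ` {1..n}" "map u [1..<Suc n]"] sorted set by simp
qed

lemma midx_in_range:
  assumes "k \<in> {1..n}" shows "midx n k = k"
proof -
  have "k + n - 1 = (k - 1) + n" and "k - 1 < n" using assms by auto
  then have "(k + n - 1) mod n = k - 1" by (simp only: mod_add_self2 mod_less)
  then show ?thesis using assms unfolding midx_def by simp
qed

lemma ent_in_range: "i \<in> {1..n} \<Longrightarrow> j \<in> {1..n} \<Longrightarrow> ent n M i j = M i j"
  unfolding ent_def by (simp add: midx_in_range)

lemma reversible_square_additive:
  fixes x y :: "nat \<Rightarrow> real"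
  assumes M: "is_matrix n M" "\<And>i j. i \<in> {1..n} \<Longrightarrow> j \<in> {1..n} \<Longrightarrow> M i j = x i + y j"
    and x: "\<And>i. i \<in> {1..n} \<Longrightarrow> x i + x (n + 1 - i) = c"
    and y: "\<And>j. j \<in> {1..n} \<Longrightarrow> y j + y (n + 1 - j) = d"
  shows "reversible_square n M"
proof -
  have E: "ent n M i j = x i + y j" if "i \<in> {1..n}" "j \<in> {1..n}" for i j
    using that M(2) ent_in_range by simp
  have rev: "n + 1 - i \<in> {1..n}" if "i \<in> {1..n}" for i using that by auto
  have row: "ent n M i j + ent n M i (n + 1 - j) = 2 * x i + d" if "i \<in> {1..n}" "j \<in> {1..n}" for i j
    using E[OF that] E[OF that(1) rev[OF that(2)]] y[OF that(2)] by simp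
  have col: "ent n M i j + ent n M (n + 1 - i) j = c + 2 * y j" if "i \<in> {1..n}" "j \<in> {1..n}" for i j
    using E[OF that] E[OF rev[OF that(1)] that(2)] x[OF that(1)] by simp
  show ?thesis unfolding reversible_square_def
  proof (intro conjI ballI M(1))
    fix i j k assume ijk: "i \<in> {1..n}" "j \<in> {1..n}" "k \<in> {1..n}"
    show "ent n M i j + ent n M i (n + 1 - j) = ent n M i k + ent n M i (n + 1 - k)"
      using row[OF ijk(1,2)] row[OF ijk(1,3)] by simp
    show "ent n M i j + ent n M (n + 1 - i) j = ent n M k j + ent n M (n + 1 - k) j"
      using col[OF ijk(1,2)] col[OF ijk(3,2)] by simp
  next
    fix i j k l assume "i \<in> {1..n}" "j \<in> {1..n}" "k \<in> {1..n}" "l \<in> {1..n}"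
    then show "ent n M i j + ent n M k l = ent n M i l + ent n M k j" by (simp add: E)
  qed
qed

definition square_of_tiling :: "nat \<Rightarrow> nat set \<times> nat set \<Rightarrow> nat \<Rightarrow> nat \<Rightarrow> real" where
  "square_of_tiling n X i j =
     (if i \<in> {1..n} \<and> j \<in> {1..n}
      then real (sorted_list_of_set (fst X) ! (i - 1) + sorted_list_of_set (snd X) ! (j - 1) + 1)
      else 0)"

lemma ent_square_of_tiling:
  "i \<in> {1..n} \<Longrightarrow> j \<in> {1..n} \<Longrightarrow> ent n (square_of_tiling n X) i j
     = real (sorted_list_of_set (fst X) ! (i - 1) + sorted_list_of_set (snd X) ! (j - 1) + 1)"
  by (simp add: ent_in_range square_of_tiling_def)

lemma reversible_square_of_tiling:
  assumes fin: "finite A" "finite B" and card: "card A = n" "card B = n"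
    and sym: "symmetric_set A" "symmetric_set B"
  shows "reversible_square n (square_of_tiling n (A, B))"
proof -
  obtain KA KB where KA: "\<forall>x\<in>A. x \<le> KA \<and> KA - x \<in> A" and KB: "\<forall>x\<in>B. x \<le> KB \<and> KB - x \<in> B"
    using sym unfolding symmetric_set_def by blast
  have rev: "n + 1 - i - 1 = n - 1 - (i - 1)" if "i \<in> {1..n}" for i using that by auto
  show ?thesis
  proof (rule reversible_square_additive)
    show "is_matrix n (square_of_tiling n (A, B))"
      unfolding is_matrix_def square_of_tiling_def by simp
    show "square_of_tiling n (A, B) i j
        = (real (sorted_list_of_set A ! (i - 1)) + 1) + real (sorted_list_of_set B ! (j - 1))"
      if "i \<in> {1..n}" "j \<in> {1..n}" for i j
      using that unfolding square_of_tiling_def by simp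
    show "(real (sorted_list_of_set A ! (i - 1)) + 1) + (real (sorted_list_of_set A ! (n + 1 - i - 1)) + 1)
        = real KA + 2" if "i \<in> {1..n}" for i
    proof -
      have "sorted_list_of_set A ! (i - 1) + sorted_list_of_set A ! (n + 1 - i - 1) = KA"
        using nth_sorted_list_of_set_symmetric[OF fin(1) KA, of "i - 1"] that card rev[OF that] by auto
      then have "real (sorted_list_of_set A ! (i - 1)) + real (sorted_list_of_set A ! (n + 1 - i - 1)) = real KA"
        by (metis of_nat_add)
      then show ?thesis by linarith
    qed
    show "real (sorted_list_of_set B ! (j - 1)) + real (sorted_list_of_set B ! (n + 1 - j - 1))
        = real KB" if "j \<in> {1..n}" for j
    proof -
      have "sorted_list_of_set B ! (j - 1) + sorted_list_of_set B ! (n + 1 - j - 1) = KB"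
        using nth_sorted_list_of_set_symmetric[OF fin(2) KB, of "j - 1"] that card rev[OF that] by auto
      then show ?thesis by (metis of_nat_add)
    qed
  qed
qed

lemma entries_square_of_tiling:
  assumes T: "tiling (n ^ 2) A B" and card: "card A = n" "card B = n"
  shows "{ent n (square_of_tiling n (A, B)) i j | i j. i \<in> {1..n} \<and> j \<in> {1..n}} = real ` {1..n ^ 2}"
proof -
  let ?a = "\<lambda>i. sorted_list_of_set A ! (i - 1)" and ?b = "\<lambda>j. sorted_list_of_set B ! (j - 1)"
  have "{ent n (square_of_tiling n (A, B)) i j | i j. i \<in> {1..n} \<and> j \<in> {1..n}}
      = (\<lambda>(i, j). ent n (square_of_tiling n (A, B)) i j) ` ({1..n} \<times> {1..n})"
    by force
  also have "\<dots> = (\<lambda>(i, j). real (?a i + ?b j + 1)) ` ({1..n} \<times> {1..n})"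
    by (rule image_cong) (auto simp: ent_square_of_tiling)
  also have "\<dots> = (\<lambda>s. real (Suc s)) ` (\<lambda>(a, b). a + b) ` (\<lambda>(i, j). (?a i, ?b j)) ` ({1..n} \<times> {1..n})"
    by (simp add: image_image case_prod_beta)
  also have "(\<lambda>(i, j). (?a i, ?b j)) ` ({1..n} \<times> {1..n}) = A \<times> B"
    unfolding image_paired_Times using image_nth_sorted_list_of_set tiling_finite[OF T] card by metis
  also have "(\<lambda>(a, b). a + b) ` (A \<times> B) = {..<n ^ 2}"
    using bij_betw_imp_surj_on[OF tiling_bij_betw[OF T]] .
  also have "(\<lambda>s. real (Suc s)) ` {..<n ^ 2} = real ` {1..n ^ 2}"
    by (simp only: image_Suc_lessThan[symmetric] image_image)
  finally show ?thesis .
qed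

lemma principal_reversible_square_of_tiling:
  assumes T: "tiling (n ^ 2) A B" and card: "card A = n" "card B = n" and one: "1 \<in> B"
    and sym: "symmetric_set A" "symmetric_set B"
  shows "principal_reversible_square n (square_of_tiling n (A, B))"
proof -
  let ?M = "square_of_tiling n (A, B)"
  have fin: "finite A" "finite B" and zero: "0 \<in> A" "0 \<in> B"
    using tiling_finite[OF T] tiling_zero[OF T] by simp_all
  have "2 \<le> n" using card_mono[OF fin(2), of "{0, 1}"] zero one card by simp
  then have one_two: "1 \<in> {1..n}" "2 \<in> {1..n}" by simp_all
  have less: "sorted_list_of_set S ! k < sorted_list_of_set S ! (Suc k)"
    if "finite S" "card S = n" "Suc k < n" for S :: "nat set" and k
    using sorted_wrt_nth_less[OF strict_sorted_list_of_set, of k "Suc k" S] that by simp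
  show ?thesis
    unfolding principal_reversible_square_def
  proof (intro conjI ballI impI)
    show "reversible_square n ?M" using reversible_square_of_tiling[OF fin card sym] .
    show "{ent n ?M i j | i j. i \<in> {1..n} \<and> j \<in> {1..n}} = real ` {1..n ^ 2}"
      using entries_square_of_tiling[OF T card] .
    show "ent n ?M i j < ent n ?M i (j + 1)" if "i \<in> {1..n}" "j \<in> {1..n}" "j < n" for i j
      using that less[OF fin(2) card(2), of "j - 1"] by (simp add: ent_square_of_tiling)
    show "ent n ?M i j < ent n ?M (i + 1) j" if "i \<in> {1..n}" "j \<in> {1..n}" "i < n" for i j
      using that less[OF fin(1) card(1), of "i - 1"] by (simp add: ent_square_of_tiling)
    show "ent n ?M 1 1 = 1" "ent n ?M 1 2 = 2"
      using one_two sorted_list_of_set_nth_0[OF fin(1) zero(1)] sorted_list_of_set_nth_0[OF fin(2) zero(2)]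
        sorted_list_of_set_nth_1[OF fin(2) zero(2) one] by (simp_all add: ent_square_of_tiling)
  qed
qed

lemma sets_of_square_of_tiling:
  assumes fin: "finite A" "finite B" and card: "card A = n" "card B = n" and zero: "0 \<in> A" "0 \<in> B"
  shows "A = (\<lambda>i. nat \<lfloor>square_of_tiling n (A, B) i 1\<rfloor> - 1) ` {1..n}"
    and "B = (\<lambda>j. nat \<lfloor>square_of_tiling n (A, B) 1 j\<rfloor> - 1) ` {1..n}"
proof -
  have "1 \<le> n" using card(1) fin(1) zero(1) card_0_eq by fastforce
  then have first: "sorted_list_of_set A ! (1 - 1) = 0" "sorted_list_of_set B ! (1 - 1) = 0"
    using sorted_list_of_set_nth_0 fin zero by simp_all
  have "A = (\<lambda>i. sorted_list_of_set A ! (i - 1)) ` {1..n}"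
    using image_nth_sorted_list_of_set[OF fin(1)] card(1) by simp
  also have "\<dots> = (\<lambda>i. nat \<lfloor>square_of_tiling n (A, B) i 1\<rfloor> - 1) ` {1..n}"
    using \<open>1 \<le> n\<close> first by (intro image_cong) (simp_all add: square_of_tiling_def)
  finally show "A = (\<lambda>i. nat \<lfloor>square_of_tiling n (A, B) i 1\<rfloor> - 1) ` {1..n}" .
  have "B = (\<lambda>j. sorted_list_of_set B ! (j - 1)) ` {1..n}"
    using image_nth_sorted_list_of_set[OF fin(2)] card(2) by simp
  also have "\<dots> = (\<lambda>j. nat \<lfloor>square_of_tiling n (A, B) 1 j\<rfloor> - 1) ` {1..n}"
    using \<open>1 \<le> n\<close> first by (intro image_cong) (simp_all add: square_of_tiling_def)
  finally show "B = (\<lambda>j. nat \<lfloor>square_of_tiling n (A, B) 1 j\<rfloor> - 1) ` {1..n}" .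
qed

lemma inj_on_square_of_tiling:
  "inj_on (square_of_tiling n) {X. finite (fst X) \<and> finite (snd X) \<and> card (fst X) = n
     \<and> card (snd X) = n \<and> 0 \<in> fst X \<and> 0 \<in> snd X}" (is "inj_on _ ?S")
proof (rule inj_onI)
  fix X Y assume X: "X \<in> ?S" and Y: "Y \<in> ?S" and eq: "square_of_tiling n X = square_of_tiling n Y"
  have "fst X = (\<lambda>i. nat \<lfloor>square_of_tiling n X i 1\<rfloor> - 1) ` {1..n}"
    and "snd X = (\<lambda>j. nat \<lfloor>square_of_tiling n X 1 j\<rfloor> - 1) ` {1..n}"
    and "fst Y = (\<lambda>i. nat \<lfloor>square_of_tiling n Y i 1\<rfloor> - 1) ` {1..n}"
    and "snd Y = (\<lambda>j. nat \<lfloor>square_of_tiling n Y 1 j\<rfloor> - 1) ` {1..n}"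
    using sets_of_square_of_tiling[of "fst X" "snd X" n] sets_of_square_of_tiling[of "fst Y" "snd Y" n] X Y
    by simp_all
  with eq show "X = Y" by (metis prod.expand)
qed

lemma principal_reversible_square_entry:
  assumes P: "principal_reversible_square n M" and ij: "i \<in> {1..n}" "j \<in> {1..n}"
  shows "M i j \<in> real ` {1..n ^ 2}"
proof -
  have "ent n M i j \<in> {ent n M i j | i j. i \<in> {1..n} \<and> j \<in> {1..n}}" using ij by blast
  also have "\<dots> = real ` {1..n ^ 2}" using P unfolding principal_reversible_square_def by blast
  finally show ?thesis using ent_in_range[OF ij] by simp
qed

lemma principal_reversible_square_additive:
  assumes P: "principal_reversible_square n M" and n: "2 \<le> n"
  obtains u w :: "nat \<Rightarrow> nat"
  where "\<And>i j. i \<in> {1..n} \<Longrightarrow> j \<in> {1..n} \<Longrightarrow> M i j = real (u i + w j + 1)"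
    and "\<And>i. 1 \<le> i \<Longrightarrow> i < n \<Longrightarrow> u i < u (Suc i)"
    and "\<And>j. 1 \<le> j \<Longrightarrow> j < n \<Longrightarrow> w j < w (Suc j)"
    and "u 1 = 0" "w 1 = 0" "w 2 = 1"
proof -
  have one_two: "1 \<in> {1..n}" "2 \<in> {1..n}" using n by auto
  have E: "ent n M i j = M i j" if "i \<in> {1..n}" "j \<in> {1..n}" for i j using ent_in_range[OF that] .
  have nat_valued: "\<exists>v. M i j = real (v + 1)" if ij: "i \<in> {1..n}" "j \<in> {1..n}" for i j
  proof -
    obtain v where "v \<in> {1..n ^ 2}" "M i j = real v"
      using principal_reversible_square_entry[OF P ij] by blast
    then show ?thesis by (intro exI[of _ "v - 1"]) auto
  qed
  define u where "u i = nat \<lfloor>M i 1\<rfloor> - 1" for i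
  define w where "w j = nat \<lfloor>M 1 j\<rfloor> - 1" for j
  have hu: "M i 1 = real (u i + 1)" if "i \<in> {1..n}" for i
    using nat_valued[OF that one_two(1)] unfolding u_def by auto
  have hw: "M 1 j = real (w j + 1)" if "j \<in> {1..n}" for j
    using nat_valued[OF one_two(1) that] unfolding w_def by auto
  have M11: "M 1 1 = 1" and M12: "M 1 2 = 2"
    using P one_two E unfolding principal_reversible_square_def by auto
  show ?thesis
  proof
    fix i j assume ij: "i \<in> {1..n}" "j \<in> {1..n}"
    have "ent n M i j + ent n M 1 1 = ent n M i 1 + ent n M 1 j"
      using P ij one_two unfolding principal_reversible_square_def reversible_square_def by blast
    then show "M i j = real (u i + w j + 1)" using E ij one_two hu[OF ij(1)] hw[OF ij(2)] M11 by simp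
  next
    fix i assume "1 \<le> i" "i < n"
    then have "ent n M i 1 < ent n M (i + 1) 1"
      using P one_two unfolding principal_reversible_square_def by auto
    then show "u i < u (Suc i)" using E hu \<open>1 \<le> i\<close> \<open>i < n\<close> one_two by simp
  next
    fix j assume "1 \<le> j" "j < n"
    then have "ent n M 1 j < ent n M 1 (j + 1)"
      using P one_two unfolding principal_reversible_square_def by auto
    then show "w j < w (Suc j)" using E hw \<open>1 \<le> j\<close> \<open>j < n\<close> one_two by simp
  next
    show "u 1 = 0" using hu[OF one_two(1)] M11 by simp
    show "w 1 = 0" using hw[OF one_two(1)] M11 by simp
    show "w 2 = 1" using hw[OF one_two(2)] M12 by simp
  qed
qed

lemma additive_square_eq_square_of_tiling:
  assumes "is_matrix n M"
    and M: "\<And>i j. i \<in> {1..n} \<Longrightarrow> j \<in> {1..n} \<Longrightarrow> M i j = real (u i + w j + 1)"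
    and u: "\<And>i. 1 \<le> i \<Longrightarrow> i < n \<Longrightarrow> u i < u (Suc i)"
    and w: "\<And>j. 1 \<le> j \<Longrightarrow> j < n \<Longrightarrow> w j < w (Suc j)"
  shows "M = square_of_tiling n (u ` {1..n}, w ` {1..n})"
proof (intro ext)
  fix i j
  show "M i j = square_of_tiling n (u ` {1..n}, w ` {1..n}) i j"
  proof (cases "i \<in> {1..n} \<and> j \<in> {1..n}")
    case True
    have "sorted_list_of_set (u ` {1..n}) = map u [1..<Suc n]"
      and "sorted_list_of_set (w ` {1..n}) = map w [1..<Suc n]"
      using sorted_list_of_set_image_upt u w by blast+
    then have "sorted_list_of_set (u ` {1..n}) ! (i - 1) = u i"
      and "sorted_list_of_set (w ` {1..n}) ! (j - 1) = w j"
      using True by (auto simp del: upt_Suc)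
    then show ?thesis using True M unfolding square_of_tiling_def by simp
  next
    case False
    then show ?thesis using assms(1) unfolding square_of_tiling_def is_matrix_def by simp
  qed
qed

lemma principal_reversible_square_imp_tiling:
  assumes P: "principal_reversible_square n M" and n: "2 \<le> n"
  obtains A B where "tiling (n ^ 2) A B" "card A = n" "1 \<in> B" "M = square_of_tiling n (A, B)"
proof -
  obtain u w where M: "\<And>i j. i \<in> {1..n} \<Longrightarrow> j \<in> {1..n} \<Longrightarrow> M i j = real (u i + w j + 1)"
    and u: "\<And>i. 1 \<le> i \<Longrightarrow> i < n \<Longrightarrow> u i < u (Suc i)"
    and w: "\<And>j. 1 \<le> j \<Longrightarrow> j < n \<Longrightarrow> w j < w (Suc j)"
    and corner: "u 1 = 0" "w 1 = 0" "w 2 = 1"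
    using principal_reversible_square_additive[OF P n] by blast
  define A B where "A = u ` {1..n}" and "B = w ` {1..n}"
  have fin: "finite A" "finite B" unfolding A_def B_def by simp_all
  have "sorted_list_of_set A = map u [1..<Suc n]" and "sorted_list_of_set B = map w [1..<Suc n]"
    unfolding A_def B_def using sorted_list_of_set_image_upt u w by blast+
  then have card: "card A = n" "card B = n"
    using length_sorted_list_of_set[of A] length_sorted_list_of_set[of B] by (simp_all del: upt_Suc)
  have one_two: "1 \<in> {1..n}" "2 \<in> {1..n}" using n by simp_all
  have "u 1 \<in> A" "w 1 \<in> B" "w 2 \<in> B" unfolding A_def B_def using one_two by simp_all
  then have zero: "0 \<in> A" "0 \<in> B" and one: "1 \<in> B" using corner by simp_all
  have "(\<lambda>(a, b). a + b) ` (A \<times> B) = {..<n ^ 2}"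
  proof (intro set_eqI iffI)
    fix x assume "x \<in> (\<lambda>(a, b). a + b) ` (A \<times> B)"
    then obtain i j where ij: "i \<in> {1..n}" "j \<in> {1..n}" "x = u i + w j" unfolding A_def B_def by auto
    then have "real (x + 1) \<in> real ` {1..n ^ 2}"
      using principal_reversible_square_entry[OF P ij(1,2)] M[OF ij(1,2)] by simp
    then show "x \<in> {..<n ^ 2}" by auto
  next
    fix x assume "x \<in> {..<n ^ 2}"
    then have "real (x + 1) \<in> real ` {1..n ^ 2}" by (intro imageI) simp
    also have "\<dots> = {ent n M i j | i j. i \<in> {1..n} \<and> j \<in> {1..n}}"
      using P unfolding principal_reversible_square_def by blast
    finally obtain i j where ij: "i \<in> {1..n}" "j \<in> {1..n}" "real (x + 1) = ent n M i j" by blast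
    then have "x = u i + w j" using M ent_in_range by simp
    then show "x \<in> (\<lambda>(a, b). a + b) ` (A \<times> B)" using ij unfolding A_def B_def by force
  qed
  then have "tiling (n ^ 2) A B" using tilingI[OF fin zero] card by (simp add: power2_eq_square)
  moreover have "is_matrix n M"
    using P unfolding principal_reversible_square_def reversible_square_def by blast
  then have "M = square_of_tiling n (A, B)"
    unfolding A_def B_def using additive_square_eq_square_of_tiling M u w by blast
  ultimately show ?thesis using that card one by blast
qed

lemma bij_betw_square_of_tiling_prime_power:
  assumes p: "prime p" and a: "1 \<le> a" and n: "n = p ^ a"
  shows "bij_betw (square_of_tiling n) {X \<in> tilings (n ^ 2). 1 \<in> snd X \<and> card (fst X) = n}
    {M. principal_reversible_square n M}"
proof (rule bij_betw_imageI)
  let ?S = "{X \<in> tilings (n ^ 2). 1 \<in> snd X \<and> card (fst X) = n}"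
  have "2 \<le> p" using p prime_ge_2_nat by blast
  moreover have "p \<le> n" using n a self_le_power[of p a] \<open>2 \<le> p\<close> by simp
  ultimately have n2: "2 \<le> n" by simp
  have N: "n ^ 2 = p ^ (2 * a)" using n by (simp add: power_mult[symmetric] mult.commute)
  have S: "tiling (n ^ 2) (fst X) (snd X)" "card (fst X) = n" "card (snd X) = n" if "X \<in> ?S" for X
  proof -
    show T: "tiling (n ^ 2) (fst X) (snd X)" and "card (fst X) = n" using that unfolding tilings_def by auto
    then show "card (snd X) = n" using tiling_card[OF T] n2 by (simp add: power2_eq_square)
  qed
  show "inj_on (square_of_tiling n) ?S"
    by (rule inj_on_subset[OF inj_on_square_of_tiling]) (use S tiling_finite tiling_zero in blast)
  show "square_of_tiling n ` ?S = {M. principal_reversible_square n M}"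
  proof (intro set_eqI iffI)
    fix M assume "M \<in> square_of_tiling n ` ?S"
    then obtain X where X: "X \<in> ?S" "M = square_of_tiling n X" by blast
    have "symmetric_set (fst X) \<and> symmetric_set (snd X)"
      using tilings_prime_power_symmetric[OF p, of X "2 * a"] X(1) N by simp
    then show "M \<in> {M. principal_reversible_square n M}"
      using principal_reversible_square_of_tiling[OF S[OF X(1)]] X by simp
  next
    fix M assume "M \<in> {M. principal_reversible_square n M}"
    then obtain A B where "tiling (n ^ 2) A B" "card A = n" "1 \<in> B" "M = square_of_tiling n (A, B)"
      using principal_reversible_square_imp_tiling n2 by blast
    then show "M \<in> square_of_tiling n ` ?S" unfolding tilings_def by force
  qed
qed

theorem corollary4:
  fixes p a n :: nat
  assumes "prime p" and "a \<ge> 1" and "n = p ^ a"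
  shows "card {M. principal_reversible_square n M} = (2 * a - 1) choose a"
proof -
  have N: "n ^ 2 = p ^ Suc (2 * a - 1)" using assms(2,3) by (simp add: power_mult[symmetric] mult.commute)
  have "card {M. principal_reversible_square n M} = card {X \<in> tilings (n ^ 2). 1 \<in> snd X \<and> card (fst X) = n}"
    using bij_betw_same_card[OF bij_betw_square_of_tiling_prime_power[OF assms]] by simp
  also have "\<dots> = (2 * a - 1) choose a"
    using card_tilings_prime_power_one_in_snd[OF assms(1)] N assms(3) by simp
  finally show ?thesis .
qed

end
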